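(* Consider the multi-market oligopoly of equal capacity $\mathcal{G}$ described in the context, and suppose the functions $u_x$ ($x\in E$) and $c$ satisfy: each $u_x$ is concave and differentiable; $c$ is convex and differentiable; and at least one of the following holds: (a) all but at most one of the $u_x$ are strictly concave, or (b) $c$ is strictly convex. Then for every player $i\in N$ and every opponent aggregate $\mathbf{s}_{-i}\in S_{-i}=(n-1)\Delta^{m-1}$, the payoff $\mathbf{s}_i\mapsto u_i(\mathbf{s}_i;\mathbf{s}_{-i})$ is strictly concave on $\Delta^{m-1}$.
   Context: Let $N=\{1,\dots,n\}$ be a set of firms (players) and $E=\{1,\dots,m\}$ a set of markets. Let $\Delta^{m-1}=\{\mathbf{v}\in\mathbb{R}^m:\mathbf{v}\ge 0,\ \mathbf{v}^{T}\mathbf{1}=1\}$. Each firm $i$ chooses a strategy $\mathbf{s}_i=(s_{ix})_{x=1}^m\in S_i=\Delta^{m-1}$ (it allocates one unit of resource across markets). For each market $x$ let $u_x:\mathbb{R}_{\ge 0}\to\mathbb{R}_{\ge 0}$ with $u_x(0)=0$ (total revenue in market $x$), and let $p_x(t)=u_x(t)/t$ for $t>0$. Let $c:\Delta^{m-1}\to\mathbb{R}_{\ge 0}$ be a common cost function. For a strategy profile $\mathbf{S}=(\mathbf{s}_i)_{i=1}^n$ put $s_x=\sum_{i=1}^n s_{ix}$, $\mathbf{s}_{-i}=\sum_{j\ne i}\mathbf{s}_j$ (so $s_x=s_{ix}+s_{-ix}$). The payoff of player $i$ is $u_i(\mathbf{s}_i;\mathbf{s}_{-i})=\sum_{x=1}^m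 p_x(s_x)s_{ix}-c(\mathbf{s}_i)$ (a term with $s_x=0$ is taken to be $0$). The game is $\mathcal{G}=(N,S,(u_i)_{i=1}^n)$ with $S=\prod_{i=1}^n \Delta^{m-1}$. *)

theory Defs
  imports "HOL-Analysis.Analysis"
begin

definition strictly_convex_on :: "'a::real_vector set \<Rightarrow> ('a \<Rightarrow> real) \<Rightarrow> bool" where
  "strictly_convex_on S f \<longleftrightarrow> convex S \<and>
     (\<forall>x\<in>S. \<forall>y\<in>S. x \<noteq> y \<longrightarrow> (\<forall>t. 0 < t \<and> t < 1 \<longrightarrow>
        f ((1 - t) *\<^sub>R x + t *\<^sub>R y) < (1 - t) * f x + t * f y))"

definition strictly_concave_on :: "'a::real_vector set \<Rightarrow> ('a \<Rightarrow> real) \<Rightarrow> bool" where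
  "strictly_concave_on S f \<longleftrightarrow> strictly_convex_on S (\<lambda>x. - f x)"

text \<open>The standard simplex \<open>\<Delta>^{m-1}\<close> in \<open>\<real>^m\<close>, markets indexed by the finite type \<open>'m\<close>.\<close>
definition std_simplex :: "(real ^ 'm::finite) set" where
  "std_simplex = {v. (\<forall>x. 0 \<le> v $ x) \<and> (\<Sum>x\<in>UNIV. v $ x) = 1}"

definition scaled_simplex :: "real \<Rightarrow> (real ^ 'm::finite) set" where
  "scaled_simplex k = {v. (\<forall>x. 0 \<le> v $ x) \<and> (\<Sum>x\<in>UNIV. v $ x) = k}"

definition price :: "('m \<Rightarrow> real \<Rightarrow> real) \<Rightarrow> 'm \<Rightarrow> real \<Rightarrow> real" where
  "price u x t = u x t / t"

text \<open>Payoff \<open>u_i(s_i; s_{-i}) = \<Sum>_x p_x(s_x) s_{ix} - c(s_i)\<close>, with \<open>s_x = s_{ix} + s_{-ix}\<close>;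
  a term with \<open>s_x = 0\<close> is taken to be 0.\<close>
definition payoff :: "('m::finite \<Rightarrow> real \<Rightarrow> real) \<Rightarrow> (real ^ 'm \<Rightarrow> real)
      \<Rightarrow> real ^ 'm \<Rightarrow> real ^ 'm \<Rightarrow> real" where
  "payoff u c si sopp =
     (\<Sum>x\<in>UNIV. (if si $ x + sopp $ x = 0 then 0
                  else price u x (si $ x + sopp $ x) * si $ x)) - c si"

end

theory Submission
  imports Defs
begin

(* The payoff is separable: in market x a firm supplying t against the rivals' supply a earns
   t u(t + a) / (t + a). For a = 0 this is u itself. For a > 0, bounding u by its tangent
   \<alpha> + b y at y = t + a, where \<alpha> \<ge> u 0 = 0, shows that the revenue lies below the concave
   function \<alpha> t' / (t' + a) + b t' and touches it at t; hence it is concave, and strictly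
   so when u is. Two distinct points of the simplex differ in at least two coordinates, so
   if at most one market is not strictly concave the revenue sum is strictly concave;
   otherwise strict convexity of c supplies the strictness. *)

lemma strictly_concave_onI:
  assumes "convex S"
    and "\<And>x y t. x \<in> S \<Longrightarrow> y \<in> S \<Longrightarrow> x \<noteq> y \<Longrightarrow> 0 < t \<Longrightarrow> t < 1 \<Longrightarrow>
           (1 - t) * f x + t * f y < f ((1 - t) *\<^sub>R x + t *\<^sub>R y)"
  shows "strictly_concave_on S f"
  using assms unfolding strictly_concave_on_def strictly_convex_on_def by fastforce

lemma strictly_concave_onD:
  assumes "strictly_concave_on S f" "x \<in> S" "y \<in> S" "x \<noteq> y" "0 < t" "t < 1"
  shows "(1 - t) * f x + t * f y < f ((1 - t) *\<^sub>R x + t *\<^sub>R y)"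
  using assms unfolding strictly_concave_on_def strictly_convex_on_def by fastforce

lemma strictly_concave_on_imp_convex: "strictly_concave_on S f \<Longrightarrow> convex S"
  by (simp add: strictly_concave_on_def strictly_convex_on_def)

lemma strictly_concave_on_uminus_iff:
  "strictly_concave_on S (\<lambda>x. - f x) \<longleftrightarrow> strictly_convex_on S f"
  by (simp add: strictly_concave_on_def)

lemma strictly_concave_on_add:
  assumes "strictly_concave_on S f" "concave_on S g"
  shows "strictly_concave_on S (\<lambda>x. f x + g x)"
proof (rule strictly_concave_onI)
  show "convex S" using assms(1) by (rule strictly_concave_on_imp_convex)
  fix x y and t :: real assume "x \<in> S" "y \<in> S" "x \<noteq> y" "0 < t" "t < 1"
  then show "(1 - t) * (f x + g x) + t * (f y + g y)
      < f ((1 - t) *\<^sub>R x + t *\<^sub>R y) + g ((1 - t) *\<^sub>R x + t *\<^sub>R y)"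
    using strictly_concave_onD[OF assms(1)] concave_onD[OF assms(2), of t x y]
    by (fastforce simp: algebra_simps)
qed

lemma concave_on_le_tangent:
  fixes g :: "real \<Rightarrow> real"
  assumes "concave_on A g" "connected A" "y \<in> interior A"
    and "(g has_real_derivative D) (at y within A)" "z \<in> A"
  shows "g z \<le> g y + D * (z - y)"
proof -
  have "- D * (z - y) \<le> - g z - - g y"
    using assms by (intro convex_on_imp_above_tangent DERIV_minus) (auto simp: concave_on_def)
  then show ?thesis by (simp add: algebra_simps)
qed

lemma strictly_concave_on_support_line_less:
  fixes g :: "real \<Rightarrow> real"
  assumes "strictly_concave_on A g" "\<And>x. x \<in> A \<Longrightarrow> g x \<le> g y + D * (x - y)"
    and "y \<in> A" "z \<in> A" "z \<noteq> y"
  shows "g z < g y + D * (z - y)"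
proof -
  define m where "m = (1 - 1/2) *\<^sub>R y + (1/2) *\<^sub>R z"
  have "m \<in> A"
    unfolding m_def using strictly_concave_on_imp_convex[OF assms(1)] assms(3,4)
    by (rule convexD_alt) auto
  then have "g m \<le> g y + D * (m - y)"
    using assms(2) by blast
  also have "m - y = (z - y) / 2"
    by (simp add: m_def field_simps)
  finally have "g m \<le> g y + D * ((z - y) / 2)" .
  moreover have "(g y + g z) / 2 < g m"
    using strictly_concave_onD[OF assms(1,3,4), of "1/2"] assms(5) by (simp add: m_def)
  ultimately show ?thesis by (simp add: field_simps)
qed

lemma concave_on_divide_add_const:
  fixes a :: real
  assumes "0 < a"
  shows "concave_on {0..} (\<lambda>x. x / (x + a))"
proof (rule concave_on_linorderI)
  fix t x y :: real assume t: "0 < t" "t < 1" and "x \<in> {0..}" "y \<in> {0..}"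
  then have xy: "0 \<le> x" "0 \<le> y" by auto
  define z where "z = (1 - t) * x + t * y"
  have "0 \<le> z" using t xy by (simp add: z_def)
  have ratio: "w / (w + a) = 1 - a * inverse (w + a)" if "0 \<le> w" for w
    using that assms by (simp add: field_simps)
  have "convex_on {a..} inverse"
    using assms by (intro convex_on_inverse) auto
  then have "inverse (z + a) \<le> (1 - t) * inverse (x + a) + t * inverse (y + a)"
    using convex_onD[of "{a..}" inverse t "x + a" "y + a"] t xy
    by (simp add: z_def algebra_simps)
  then have "a * inverse (z + a) \<le> a * ((1 - t) * inverse (x + a) + t * inverse (y + a))"
    using assms by (simp add: mult_left_mono)
  have "(1 - t) * (x / (x + a)) + t * (y / (y + a))
      = (1 - t) * (1 - a * inverse (x + a)) + t * (1 - a * inverse (y + a))"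
    by (simp only: ratio[OF xy(1)] ratio[OF xy(2)])
  also have "\<dots> = 1 - a * ((1 - t) * inverse (x + a) + t * inverse (y + a))"
    by (simp add: algebra_simps)
  also have "\<dots> \<le> 1 - a * inverse (z + a)"
    using \<open>a * inverse (z + a) \<le> _\<close> by simp
  also have "\<dots> = z / (z + a)"
    by (simp only: ratio[OF \<open>0 \<le> z\<close>])
  finally have "(1 - t) * (x / (x + a)) + t * (y / (y + a)) \<le> z / (z + a)" .
  then show "(1 - t) * (x / (x + a)) + t * (y / (y + a))
      \<le> ((1 - t) *\<^sub>R x + t *\<^sub>R y) / ((1 - t) *\<^sub>R x + t *\<^sub>R y + a)"
    by (simp add: z_def)
qed auto

definition firm_revenue :: "(real \<Rightarrow> real) \<Rightarrow> real \<Rightarrow> real \<Rightarrow> real" where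
  "firm_revenue g a t = (if t + a = 0 then 0 else g (t + a) / (t + a) * t)"

lemma payoff_eq_sum_firm_revenue:
  "payoff u c si sopp = (\<Sum>x\<in>UNIV. firm_revenue (u x) (sopp $ x) (si $ x)) - c si"
  unfolding payoff_def price_def firm_revenue_def by simp

lemma firm_revenue_no_rivals: "g 0 = 0 \<Longrightarrow> firm_revenue g 0 = g"
  by (auto simp: firm_revenue_def)

lemma firm_revenue_concave_majorant:
  fixes g :: "real \<Rightarrow> real"
  assumes conc: "concave_on {0..} g" and diff: "g differentiable_on {0..}" and g0: "g 0 = 0"
    and a: "0 < a" and t: "0 \<le> t"
  obtains L where "concave_on {0..} L" "L t = firm_revenue g a t"
    "\<And>x. 0 \<le> x \<Longrightarrow> firm_revenue g a x \<le> L x"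
    "\<And>x. strictly_concave_on {0..} g \<Longrightarrow> 0 < x \<Longrightarrow> x \<noteq> t \<Longrightarrow> firm_revenue g a x < L x"
proof -
  define y where "y = t + a"
  have y: "0 < y" using a t by (simp add: y_def)
  then have "g differentiable (at y within {0..})"
    using diff by (simp add: differentiable_on_def)
  then obtain b where b: "(g has_real_derivative b) (at y within {0..})"
    by (auto simp: real_differentiable_def)
  have tangent: "g z \<le> g y + b * (z - y)" if "0 \<le> z" for z
    using concave_on_le_tangent[OF conc _ _ b] y that by auto
  define \<alpha> where "\<alpha> = g y - b * y"
  have "0 \<le> \<alpha>" using tangent[of 0] g0 by (simp add: \<alpha>_def)
  define L where "L x = \<alpha> * (x / (x + a)) + b * x" for x
  have "concave_on {0..} (\<lambda>x. b * x)"
    by (auto simp: concave_on_iff algebra_simps)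
  then have "concave_on {0..} L"
    unfolding L_def
    by (rule concave_on_add[OF concave_on_cmul[OF \<open>0 \<le> \<alpha>\<close> concave_on_divide_add_const[OF a]]])
  moreover have "L t = firm_revenue g a t"
    using y by (simp add: L_def \<alpha>_def firm_revenue_def y_def field_simps)
  moreover have revenue_eq: "firm_revenue g a x = g (x + a) / (x + a) * x"
    and L_eq: "L x = (\<alpha> + b * (x + a)) / (x + a) * x" if "0 \<le> x" for x
    using that a by (simp_all add: firm_revenue_def L_def field_simps)
  moreover have "firm_revenue g a x \<le> L x" if "0 \<le> x" for x
  proof -
    have "g (x + a) \<le> \<alpha> + b * (x + a)"
      using tangent[of "x + a"] that a by (simp add: \<alpha>_def algebra_simps)
    then show ?thesis
      unfolding revenue_eq[OF that] L_eq[OF that] using that a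
      by (intro mult_right_mono divide_right_mono) auto
  qed
  moreover have "firm_revenue g a x < L x"
    if "strictly_concave_on {0..} g" "0 < x" "x \<noteq> t" for x
  proof -
    have "g (x + a) < g y + b * (x + a - y)"
      using that a y by (intro strictly_concave_on_support_line_less[OF that(1) tangent])
        (auto simp: y_def)
    then have "g (x + a) < \<alpha> + b * (x + a)"
      by (simp add: \<alpha>_def algebra_simps)
    then show ?thesis
      unfolding revenue_eq[OF less_imp_le[OF that(2)]] L_eq[OF less_imp_le[OF that(2)]]
      using that a by (intro mult_strict_right_mono divide_strict_right_mono) auto
  qed
  ultimately show ?thesis using that by blast
qed

lemma concave_on_firm_revenue:
  fixes g :: "real \<Rightarrow> real"
  assumes conc: "concave_on {0..} g" and diff: "g differentiable_on {0..}" and g0: "g 0 = 0"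
    and a: "0 \<le> a"
  shows "concave_on {0..} (firm_revenue g a)"
proof (cases "a = 0")
  case True
  then show ?thesis using conc g0 by (simp add: firm_revenue_no_rivals)
next
  case False
  with a have "0 < a" by simp
  show ?thesis
  proof (rule concave_on_linorderI)
    fix t x y :: real assume t: "0 < t" "t < 1" and xy: "x \<in> {0..}" "y \<in> {0..}"
    define z where "z = (1 - t) * x + t * y"
    have "0 \<le> z" using t xy by (simp add: z_def)
    obtain L where L: "concave_on {0..} L" "L z = firm_revenue g a z"
      "\<And>w. 0 \<le> w \<Longrightarrow> firm_revenue g a w \<le> L w"
      by (rule firm_revenue_concave_majorant[OF conc diff g0 \<open>0 < a\<close> \<open>0 \<le> z\<close>]) blast
    have "(1 - t) * firm_revenue g a x + t * firm_revenue g a y \<le> (1 - t) * L x + t * L y"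
      using L(3) xy t by (intro add_mono mult_left_mono) auto
    also have "\<dots> \<le> L z"
      using concave_onD[OF L(1), of t x y] t xy by (simp add: z_def)
    finally show "(1 - t) * firm_revenue g a x + t * firm_revenue g a y
        \<le> firm_revenue g a ((1 - t) *\<^sub>R x + t *\<^sub>R y)"
      using L(2) by (simp add: z_def)
  qed auto
qed

lemma strictly_concave_on_firm_revenue:
  fixes g :: "real \<Rightarrow> real"
  assumes conc: "concave_on {0..} g" and diff: "g differentiable_on {0..}" and g0: "g 0 = 0"
    and strict: "strictly_concave_on {0..} g" and a: "0 \<le> a"
  shows "strictly_concave_on {0..} (firm_revenue g a)"
proof (cases "a = 0")
  case True
  then show ?thesis using strict g0 by (simp add: firm_revenue_no_rivals)
next
  case False
  with a have "0 < a" by simp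
  show ?thesis
  proof (rule strictly_concave_onI)
    fix x y t :: real assume xy: "x \<in> {0..}" "y \<in> {0..}" "x \<noteq> y" and t: "0 < t" "t < 1"
    define z where "z = (1 - t) * x + t * y"
    have "0 \<le> z" using t xy by (simp add: z_def)
    obtain L where L: "concave_on {0..} L" "L z = firm_revenue g a z"
      "\<And>w. 0 \<le> w \<Longrightarrow> firm_revenue g a w \<le> L w"
      "\<And>w. strictly_concave_on {0..} g \<Longrightarrow> 0 < w \<Longrightarrow> w \<noteq> z \<Longrightarrow> firm_revenue g a w < L w"
      using firm_revenue_concave_majorant[OF conc diff g0 \<open>0 < a\<close> \<open>0 \<le> z\<close>] by blast
    (* L touches the revenue at 0 as well, so strictness must come from a positive endpoint. *)
    have "(1 - t) * firm_revenue g a x + t * firm_revenue g a y < (1 - t) * L x + t * L y"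
    proof (cases "0 < x")
      case True
      have "x \<noteq> z" using xy t by (auto simp: z_def algebra_simps)
      then show ?thesis
        using L(3)[of y] L(4)[OF strict True] xy t by (intro add_less_le_mono) auto
    next
      case False
      then have "0 < y" "y \<noteq> z" using xy t by (auto simp: z_def algebra_simps)
      then show ?thesis
        using L(3)[of x] L(4)[OF strict, of y] xy t by (intro add_le_less_mono) auto
    qed
    also have "\<dots> \<le> L z"
      using concave_onD[OF L(1), of t x y] t xy by (simp add: z_def)
    finally show "(1 - t) * firm_revenue g a x + t * firm_revenue g a y
        < firm_revenue g a ((1 - t) *\<^sub>R x + t *\<^sub>R y)"
      using L(2) by (simp add: z_def)
  qed auto
qed

lemma convex_std_simplex: "convex std_simplex"
  unfolding convex_def std_simplex_def
  by (auto simp: sum.distrib simp flip: sum_distrib_left)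

lemma std_simplex_nonneg: "v \<in> std_simplex \<Longrightarrow> v $ x \<in> {0..}"
  by (simp add: std_simplex_def)

lemma std_simplex_sum: "v \<in> std_simplex \<Longrightarrow> (\<Sum>x\<in>UNIV. v $ x) = 1"
  by (simp add: std_simplex_def)

lemma two_coordinates_differ_if_sum_eq:
  fixes v w :: "real ^ 'n::finite"
  assumes "(\<Sum>x\<in>UNIV. v $ x) = (\<Sum>x\<in>UNIV. w $ x)" "v \<noteq> w"
  obtains x y where "x \<noteq> y" "v $ x \<noteq> w $ x" "v $ y \<noteq> w $ y"
proof -
  obtain x where x: "v $ x \<noteq> w $ x" using assms(2) by (auto simp: vec_eq_iff)
  have "\<exists>y. y \<noteq> x \<and> v $ y \<noteq> w $ y"
  proof (rule ccontr)
    assume "\<not> ?thesis"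
    then have "(\<Sum>y\<in>UNIV - {x}. v $ y) = (\<Sum>y\<in>UNIV - {x}. w $ y)"
      by (intro sum.cong) auto
    then show False
      using assms(1) x sum.remove[of UNIV x "\<lambda>y. v $ y"] sum.remove[of UNIV x "\<lambda>y. w $ y"]
      by simp
  qed
  then show ?thesis using that x by blast
qed

lemma concave_on_sum_coordinates:
  fixes F :: "'n::finite \<Rightarrow> real \<Rightarrow> real"
  assumes "convex S" "\<And>v x. v \<in> S \<Longrightarrow> v $ x \<in> I" "\<And>x. concave_on I (F x)"
  shows "concave_on S (\<lambda>v. \<Sum>x\<in>UNIV. F x (v $ x))"
  unfolding concave_on_iff
proof (intro conjI ballI allI impI)
  fix v w and p q :: real assume "v \<in> S" "w \<in> S" "0 \<le> p" "0 \<le> q" "p + q = 1"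
  then have "p * F x (v $ x) + q * F x (w $ x) \<le> F x ((p *\<^sub>R v + q *\<^sub>R w) $ x)" for x
    using assms(2,3) by (simp add: concave_on_iff)
  then show "p * (\<Sum>x\<in>UNIV. F x (v $ x)) + q * (\<Sum>x\<in>UNIV. F x (w $ x))
      \<le> (\<Sum>x\<in>UNIV. F x ((p *\<^sub>R v + q *\<^sub>R w) $ x))"
    by (simp add: sum_distrib_left flip: sum.distrib) (rule sum_mono)
qed (rule assms(1))

lemma strictly_concave_on_sum_coordinates:
  fixes F :: "'n::finite \<Rightarrow> real \<Rightarrow> real"
  assumes "convex S" "\<And>v x. v \<in> S \<Longrightarrow> v $ x \<in> I" "\<And>x. concave_on I (F x)"
    and "\<And>v. v \<in> S \<Longrightarrow> (\<Sum>x\<in>UNIV. v $ x) = k"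
    and "card {x. \<not> strictly_concave_on I (F x)} \<le> 1"
  shows "strictly_concave_on S (\<lambda>v. \<Sum>x\<in>UNIV. F x (v $ x))"
proof (rule strictly_concave_onI)
  fix v w and t :: real assume vw: "v \<in> S" "w \<in> S" "v \<noteq> w" and t: "0 < t" "t < 1"
  obtain x where x: "strictly_concave_on I (F x)" "v $ x \<noteq> w $ x"
  proof -
    obtain x y where xy: "x \<noteq> y" "v $ x \<noteq> w $ x" "v $ y \<noteq> w $ y"
      using two_coordinates_differ_if_sum_eq[of v w] vw assms(4) by metis
    have "\<not> {x, y} \<subseteq> {x. \<not> strictly_concave_on I (F x)}"
      using card_mono[of "{x. \<not> strictly_concave_on I (F x)}" "{x, y}"] assms(5) xy(1) by auto
    then show ?thesis using that xy by blast
  qed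
  have "(1 - t) * F y (v $ y) + t * F y (w $ y) \<le> F y ((1 - t) * v $ y + t * w $ y)" for y
    using concave_onD[OF assms(3), of t "v $ y" "w $ y"] assms(2) vw t by simp
  moreover have "(1 - t) * F x (v $ x) + t * F x (w $ x) < F x ((1 - t) * v $ x + t * w $ x)"
    using strictly_concave_onD[OF x(1) _ _ x(2) t] assms(2) vw by simp
  ultimately have "(\<Sum>y\<in>UNIV. (1 - t) * F y (v $ y) + t * F y (w $ y))
      < (\<Sum>y\<in>UNIV. F y ((1 - t) * v $ y + t * w $ y))"
    by (intro sum_strict_mono_ex1) auto
  then show "(1 - t) * (\<Sum>x\<in>UNIV. F x (v $ x)) + t * (\<Sum>x\<in>UNIV. F x (w $ x))
      < (\<Sum>x\<in>UNIV. F x (((1 - t) *\<^sub>R v + t *\<^sub>R w) $ x))"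
    by (simp add: sum_distrib_left sum.distrib)
qed (rule assms(1))

theorem proposition1:
  fixes n :: nat
    and u :: "'m::finite \<Rightarrow> real \<Rightarrow> real"
    and c :: "real ^ 'm \<Rightarrow> real"
    and i :: nat
    and sopp :: "real ^ 'm"
  assumes u_nonneg: "\<And>x t. 0 \<le> t \<Longrightarrow> 0 \<le> u x t"
    and u_zero: "\<And>x. u x 0 = 0"
    and c_nonneg: "\<And>s. s \<in> std_simplex \<Longrightarrow> 0 \<le> c s"
    and u_concave: "\<And>x. concave_on {0..} (u x)"
    and u_diff: "\<And>x. u x differentiable_on {0..}"
    and c_convex: "convex_on std_simplex c"
    and c_diff: "c differentiable_on std_simplex"
    and strictness: "card {x. \<not> strictly_concave_on {0..} (u x)} \<le> 1
                     \<or> strictly_convex_on std_simplex c"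
    and i_player: "i \<in> {1..n}"
    and sopp_in: "sopp \<in> scaled_simplex (real n - 1)"
  shows "strictly_concave_on std_simplex (\<lambda>si. payoff u c si sopp)"
proof -
  have sopp_nonneg: "0 \<le> sopp $ x" for x
    using sopp_in by (simp add: scaled_simplex_def)
  then have revenue_concave: "concave_on {0..} (firm_revenue (u x) (sopp $ x))" for x
    using concave_on_firm_revenue[OF u_concave u_diff u_zero] by blast
  define R where "R v = (\<Sum>x\<in>UNIV. firm_revenue (u x) (sopp $ x) (v $ x))" for v :: "real ^ 'm"
  from strictness have "strictly_concave_on std_simplex (\<lambda>v. R v + - c v)"
  proof
    assume "card {x. \<not> strictly_concave_on {0..} (u x)} \<le> 1"
    moreover have "{x. \<not> strictly_concave_on {0..} (firm_revenue (u x) (sopp $ x))}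
        \<subseteq> {x. \<not> strictly_concave_on {0..} (u x)}"
      using strictly_concave_on_firm_revenue[OF u_concave u_diff u_zero] sopp_nonneg by blast
    ultimately have "card {x. \<not> strictly_concave_on {0..} (firm_revenue (u x) (sopp $ x))} \<le> 1"
      by (meson card_mono finite order_trans)
    with convex_std_simplex std_simplex_nonneg revenue_concave std_simplex_sum
    have "strictly_concave_on std_simplex R"
      unfolding R_def by (rule strictly_concave_on_sum_coordinates)
    then show ?thesis
      using c_convex[unfolded convex_on_iff_concave] by (rule strictly_concave_on_add)
  next
    assume "strictly_convex_on std_simplex c"
    moreover have "concave_on std_simplex R"
      unfolding R_def using convex_std_simplex std_simplex_nonneg revenue_concave
      by (rule concave_on_sum_coordinates)
    ultimately show ?thesis
      using strictly_concave_on_add[of std_simplex "\<lambda>v. - c v" R]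
      by (simp add: strictly_concave_on_uminus_iff add.commute)
  qed
  then show ?thesis
    by (simp add: payoff_eq_sum_firm_revenue R_def)
qed

end
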